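(* Let $\Phi$ be a real $N\times d$ matrix satisfying the Restricted Isometry Condition with parameters $(2n,\varepsilon)$, $\varepsilon = 0.03/\sqrt{\log n}$, let $v \ne 0$ be $n$-sparse, $x = \Phi v$, and consider an iteration of ROMP run on $x$ with sparsity level $n$, with $I$ the index set and $r\ne0$ the residual at the start of that iteration, $u = \Phi^* r$, and $J_0$ the set chosen in the regularization step of that iteration. Let $v_0 = v|_{\mathrm{supp}(v)\setminus I}$ (equal to $v$ on $\mathrm{supp}(v)\setminus I$, $0$ elsewhere). Then $\|u|_{J_0}\|_2 \ge \frac{0.32}{\sqrt{\log n}}\,\|v_0\|_2$.
   Context: A vector is $n$-sparse if it has at most $n$ nonzero coordinates. $\Phi$ satisfies the Restricted Isometry Condition with parameters $(m,\varepsilon)$ if $(1-\varepsilon)\|w\|_2 \le \|\Phi w\|_2 \le (1+\varepsilon)\|w\|_2$ for all $m$-sparse $w$. $y|_T$ is the restriction of $y$ to coordinates in $T$. ROMP with input $x$ and sparsity level $n$: Initialize $I=\emptyset$, $r=x$. Repeat until $r=0$: (Identify) $u=\Phi^*r$, choose a set $J$ of the $n$ biggest coordinates of $u$ in magnitude, or all nonzero coordinates of $u$, whichever set is smaller; (Regularize) among subsets $J_0\subset J$ with $|u(i)|\le 2|u(j)|$ for all $i,j\in J_0$, choose one maximizing $\|u|_{J_0}\|_2$; (Update) $I\leftarrow I\cup J_0$, $y=\operatorname{argmin}_{z\in\mathbb{R}^I}\|x-\Phi z\|_2$, $r=x-\Phi y$. Output $I$. *)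

theory Defs
  imports "HOL-Analysis.Analysis"
begin

definition supp :: "real^'d \<Rightarrow> 'd set" where
  "supp w = {i. w $ i \<noteq> 0}"

definition sparse :: "nat \<Rightarrow> real^'d \<Rightarrow> bool" where
  "sparse m w \<longleftrightarrow> card (supp w) \<le> m"

definition RIC :: "real^'d^'N \<Rightarrow> nat \<Rightarrow> real \<Rightarrow> bool" where
  "RIC \<Phi> m \<epsilon> \<longleftrightarrow> (\<forall>w. sparse m w \<longrightarrow>
      (1 - \<epsilon>) * norm w \<le> norm (\<Phi> *v w) \<and> norm (\<Phi> *v w) \<le> (1 + \<epsilon>) * norm w)"

definition restrict_vec :: "real^'d \<Rightarrow> 'd set \<Rightarrow> real^'d" where
  "restrict_vec y T = (\<chi> i. if i \<in> T then y $ i else 0)"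

definition identify_ok :: "nat \<Rightarrow> real^'d \<Rightarrow> 'd set \<Rightarrow> bool" where
  "identify_ok n u J \<longleftrightarrow>
     (if card (supp u) \<le> n then J = supp u
      else card J = n \<and> (\<forall>i\<in>J. \<forall>j. j \<notin> J \<longrightarrow> \<bar>u $ j\<bar> \<le> \<bar>u $ i\<bar>))"

definition comparable :: "real^'d \<Rightarrow> 'd set \<Rightarrow> bool" where
  "comparable u J0 \<longleftrightarrow> (\<forall>i\<in>J0. \<forall>j\<in>J0. \<bar>u $ i\<bar> \<le> 2 * \<bar>u $ j\<bar>)"

definition regularize_ok :: "real^'d \<Rightarrow> 'd set \<Rightarrow> 'd set \<Rightarrow> bool" where
  "regularize_ok u J J0 \<longleftrightarrow> J0 \<subseteq> J \<and> comparable u J0 \<and>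
     (\<forall>K. K \<subseteq> J \<and> comparable u K \<longrightarrow> norm (restrict_vec u K) \<le> norm (restrict_vec u J0))"

definition lsq_ok :: "real^'d^'N \<Rightarrow> real^'N \<Rightarrow> 'd set \<Rightarrow> real^'d \<Rightarrow> bool" where
  "lsq_ok \<Phi> x I y \<longleftrightarrow> supp y \<subseteq> I \<and>
     (\<forall>z. supp z \<subseteq> I \<longrightarrow> norm (x - \<Phi> *v y) \<le> norm (x - \<Phi> *v z))"

inductive romp_state :: "real^'d^'N \<Rightarrow> real^'N \<Rightarrow> nat \<Rightarrow> 'd set \<Rightarrow> real^'N \<Rightarrow> bool"
  for \<Phi> x n where
  init: "romp_state \<Phi> x n {} x"
| step: "\<lbrakk> romp_state \<Phi> x n I r; r \<noteq> 0; u = transpose \<Phi> *v r;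
           identify_ok n u J; regularize_ok u J J0; lsq_ok \<Phi> x (I \<union> J0) y \<rbrakk>
         \<Longrightarrow> romp_state \<Phi> x n (I \<union> J0) (x - \<Phi> *v y)"

end

theory Submission
  imports Defs "HOL-Library.Log_Nat"
begin

text \<open>Write the residual as \<open>r = \<Phi> (v\<^sub>0 - z)\<close> with \<open>v\<^sub>0\<close> the part of \<open>v\<close> outside \<open>I\<close> and \<open>z\<close>
  supported on \<open>I\<close>, \<open>r \<bottom> \<Phi> z\<close>. By the RIC, \<open>\<Phi>\<close> keeps disjointly supported vectors nearly
  orthogonal, so \<open>u = \<Phi>\<^sup>T r\<close> has energy at least \<open>(1 - \<epsilon>)\<^sup>4 \<parallel>v\<^sub>0\<parallel>\<^sup>2\<close> on \<open>supp v - I\<close> and only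
  \<open>O(\<epsilon> \<parallel>v\<^sub>0\<parallel>)\<close> of norm on any \<open>n\<close> coordinates off \<open>supp v\<close>. Identification keeps the former
  energy; cutting \<open>J\<close> into \<open>\<lceil>log\<^sub>2 n\<rceil> + 1\<close> dyadic layers of comparable coordinates shows that
  the regularized set \<open>J0\<close> keeps a \<open>1 / (\<lceil>log\<^sub>2 n\<rceil> + 1)\<close> share of it, which for
  \<open>\<epsilon> = 0.03 / \<surd>(ln n)\<close> gives the bound. The RIC of order \<open>2 n\<close> applies throughout because,
  by induction along the run, at most half of every selected set lies off \<open>supp v\<close>: otherwise
  the off-support bound would contradict the energy retained in \<open>J0\<close>.\<close>

lemma supp_eq_empty_iff: "supp w = {} \<longleftrightarrow> w = 0"
  by (auto simp: supp_def vec_eq_iff)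

lemma supp_restrict_vec: "supp (restrict_vec y T) = T \<inter> supp y"
  by (auto simp: supp_def restrict_vec_def)

lemma inner_restrict_vec_left: "inner (restrict_vec y T) w = (\<Sum>i\<in>T. y$i * w$i)"
proof -
  have "inner (restrict_vec y T) w = (\<Sum>i\<in>UNIV. if i \<in> T then y$i * w$i else 0)"
    unfolding inner_vec_def restrict_vec_def by (rule sum.cong) auto
  then show ?thesis
    by (simp add: sum.If_cases)
qed

lemma norm_restrict_vec_sq: "(norm (restrict_vec y T))\<^sup>2 = (\<Sum>i\<in>T. (y$i)\<^sup>2)"
  unfolding power2_norm_eq_inner inner_restrict_vec_left
  by (rule sum.cong) (auto simp: restrict_vec_def power2_eq_square)

lemma inner_restrict_vec_supp: "supp w \<subseteq> T \<Longrightarrow> inner (restrict_vec y T) w = inner y w"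
  unfolding inner_vec_def restrict_vec_def by (rule sum.cong) (auto simp: supp_def)

lemma inner_eq_0_if_disjoint_supp: "supp a \<inter> supp b = {} \<Longrightarrow> inner a b = 0"
  unfolding inner_vec_def by (rule sum.neutral) (auto simp: supp_def)

lemma norm_le_norm_diff_if_disjoint_supp:
  assumes "supp a \<inter> supp b = {}"
  shows "norm a \<le> norm (a - b)"
proof (rule power2_le_imp_le)
  have "(norm (a - b))\<^sup>2 = (norm a)\<^sup>2 + (norm b)\<^sup>2"
    using inner_eq_0_if_disjoint_supp[OF assms]
    by (simp add: power2_norm_eq_inner inner_diff_left inner_diff_right inner_commute)
  then show "(norm a)\<^sup>2 \<le> (norm (a - b))\<^sup>2"
    by simp
qed simp

lemma transpose_mult_vec_nth: "(transpose \<Phi> *v r) $ i = inner r (\<Phi> *v axis i (1::real))"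
proof -
  have "inner (transpose \<Phi> *v r) (axis i 1) = inner r (\<Phi> *v axis i 1)"
    by (simp add: dot_lmul_matrix)
  then show ?thesis
    by (simp add: inner_axis)
qed

lemma square_le_cancel:
  fixes t c d :: real
  assumes "c * t\<^sup>2 \<le> d * t" "0 \<le> t" "0 \<le> d"
  shows "c * t \<le> d"
proof (cases "t = 0")
  case False
  then have "0 < t"
    using assms(2) by simp
  moreover have "t * (c * t) \<le> t * d"
    using assms(1) by (simp add: power2_eq_square mult_ac)
  ultimately show ?thesis
    by simp
qed (use assms(3) in simp)

lemma sum_le_sum_if_card_le_dominated:
  fixes f g :: "'a \<Rightarrow> 'b::ordered_comm_monoid_add"
  assumes "card A \<le> card B" "\<And>a b. a \<in> A \<Longrightarrow> b \<in> B \<Longrightarrow> f a \<le> g b"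
    and "\<And>b. b \<in> B \<Longrightarrow> 0 \<le> g b"
  shows "sum f A \<le> sum g B"
proof (cases "finite A \<and> finite B")
  case True
  then obtain h where h: "inj_on h A" "h ` A \<subseteq> B"
    using card_le_inj[of A B] assms(1) by blast
  have "sum f A \<le> sum (g \<circ> h) A"
    using h(2) by (intro sum_mono) (auto intro!: assms(2))
  also have "\<dots> = sum g (h ` A)"
    by (rule sum.reindex[OF h(1), symmetric])
  also have "\<dots> \<le> sum g B"
    using True h(2) assms(3) by (intro sum_mono2) auto
  finally show ?thesis .
next
  case False
  have "sum f A = 0"
  proof (cases "finite A")
    case True
    then have "card B = 0"
      using False by simp
    then show ?thesis
      using True assms(1) by simp
  qed simp
  then show ?thesis
    using assms(3) by (simp add: sum_nonneg)
qed

lemma RIC_sq_bounds: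
  assumes "RIC \<Phi> m \<epsilon>" "\<epsilon> \<le> 1" "card (supp w) \<le> m"
  shows "(1 - \<epsilon>)\<^sup>2 * (norm w)\<^sup>2 \<le> (norm (\<Phi> *v w))\<^sup>2"
    and "(norm (\<Phi> *v w))\<^sup>2 \<le> (1 + \<epsilon>)\<^sup>2 * (norm w)\<^sup>2"
proof -
  have "(1 - \<epsilon>) * norm w \<le> norm (\<Phi> *v w)" "norm (\<Phi> *v w) \<le> (1 + \<epsilon>) * norm w"
    using assms unfolding RIC_def sparse_def by auto
  then show "(1 - \<epsilon>)\<^sup>2 * (norm w)\<^sup>2 \<le> (norm (\<Phi> *v w))\<^sup>2"
    and "(norm (\<Phi> *v w))\<^sup>2 \<le> (1 + \<epsilon>)\<^sup>2 * (norm w)\<^sup>2"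
    using assms(2) by (auto simp flip: power_mult_distrib intro: power_mono)
qed

text \<open>Apply the RIC to \<open>\<beta> a \<plusminus> \<alpha> b\<close> with \<open>\<alpha> = \<parallel>a\<parallel>\<close>, \<open>\<beta> = \<parallel>b\<parallel>\<close>, both of norm \<open>\<surd>2 \<alpha> \<beta>\<close>, and polarize.\<close>
lemma RIC_inner_le:
  assumes RIC: "RIC \<Phi> m \<epsilon>" and "\<epsilon> \<le> 1"
    and disj: "supp a \<inter> supp b = {}" and card: "card (supp a \<union> supp b) \<le> m"
  shows "\<bar>inner (\<Phi> *v a) (\<Phi> *v b)\<bar> \<le> 2 * \<epsilon> * norm a * norm b"
proof -
  define \<alpha> \<beta> where "\<alpha> = norm a" and "\<beta> = norm b"
  define p q where "p = \<beta> *\<^sub>R a + \<alpha> *\<^sub>R b" and "q = \<beta> *\<^sub>R a - \<alpha> *\<^sub>R b"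
  define N where "N = 2 * \<alpha>\<^sup>2 * \<beta>\<^sup>2"
  have ab: "inner a b = 0"
    using inner_eq_0_if_disjoint_supp[OF disj] .
  have aa: "inner a a = \<alpha>\<^sup>2" "inner b b = \<beta>\<^sup>2"
    by (simp_all add: \<alpha>_def \<beta>_def power2_norm_eq_inner)
  have norm_pq: "(norm p)\<^sup>2 = N" "(norm q)\<^sup>2 = N"
    unfolding p_def q_def N_def power2_norm_eq_inner
    by (simp_all add: inner_add_left inner_add_right inner_diff_left inner_diff_right
        ab inner_commute aa algebra_simps power2_eq_square)
  have "supp p \<subseteq> supp a \<union> supp b" "supp q \<subseteq> supp a \<union> supp b"
    by (auto simp: p_def q_def supp_def)
  then have "card (supp p) \<le> card (supp a \<union> supp b)" "card (supp q) \<le> card (supp a \<union> supp b)"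
    by (simp_all add: card_mono)
  then have card_p: "card (supp p) \<le> m" and card_q: "card (supp q) \<le> m"
    using card by linarith+
  have bounds:
    "(1 - \<epsilon>)\<^sup>2 * N \<le> (norm (\<Phi> *v p))\<^sup>2" "(norm (\<Phi> *v p))\<^sup>2 \<le> (1 + \<epsilon>)\<^sup>2 * N"
    "(1 - \<epsilon>)\<^sup>2 * N \<le> (norm (\<Phi> *v q))\<^sup>2" "(norm (\<Phi> *v q))\<^sup>2 \<le> (1 + \<epsilon>)\<^sup>2 * N"
    using RIC_sq_bounds[OF RIC \<open>\<epsilon> \<le> 1\<close> card_p] RIC_sq_bounds[OF RIC \<open>\<epsilon> \<le> 1\<close> card_q]
    by (simp_all add: norm_pq)
  have Pp: "\<Phi> *v p = \<beta> *\<^sub>R (\<Phi> *v a) + \<alpha> *\<^sub>R (\<Phi> *v b)"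
    and Pq: "\<Phi> *v q = \<beta> *\<^sub>R (\<Phi> *v a) - \<alpha> *\<^sub>R (\<Phi> *v b)"
    by (simp_all add: p_def q_def matrix_vector_right_distrib matrix_vector_mult_diff_distrib
        matrix_vector_mult_scaleR)
  have "4 * (\<alpha> * \<beta>) * inner (\<Phi> *v a) (\<Phi> *v b) = (norm (\<Phi> *v p))\<^sup>2 - (norm (\<Phi> *v q))\<^sup>2"
    unfolding Pp Pq power2_norm_eq_inner
    by (simp add: inner_add_left inner_add_right inner_diff_left inner_diff_right inner_commute
        algebra_simps)
  also have "\<bar>\<dots>\<bar> \<le> (1 + \<epsilon>)\<^sup>2 * N - (1 - \<epsilon>)\<^sup>2 * N"
    using bounds by linarith
  also have "\<dots> = 4 * (\<alpha> * \<beta>) * (2 * \<epsilon> * \<alpha> * \<beta>)"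
    by (simp add: N_def power2_eq_square algebra_simps)
  finally have "(\<alpha> * \<beta>) * \<bar>inner (\<Phi> *v a) (\<Phi> *v b)\<bar> \<le> (\<alpha> * \<beta>) * (2 * \<epsilon> * \<alpha> * \<beta>)"
    by (simp add: abs_mult \<alpha>_def \<beta>_def mult_ac)
  then show ?thesis
    by (cases "\<alpha> * \<beta> = 0") (auto simp: \<alpha>_def \<beta>_def)
qed

context
  fixes \<Phi> :: "real^'d^'N" and a z :: "real^'d" and r :: "real^'N" and m :: nat and \<epsilon> :: real
  assumes RIC: "RIC \<Phi> m \<epsilon>" and eps: "0 \<le> \<epsilon>" "\<epsilon> \<le> 1"
    and disj: "supp a \<inter> supp z = {}" and card: "card (supp a \<union> supp z) \<le> m"
    and residual: "r = \<Phi> *v (a - z)" and orth: "inner r (\<Phi> *v z) = 0"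
begin

lemma residual_image_norm_le: "(1 - \<epsilon>) * norm (\<Phi> *v z) \<le> 2 * \<epsilon> * norm a"
proof (rule square_le_cancel)
  have "card (supp z) \<le> m"
    by (rule le_trans[OF card_mono card]) auto
  then have lower: "(1 - \<epsilon>) * norm z \<le> norm (\<Phi> *v z)"
    using RIC unfolding RIC_def sparse_def by blast
  have "(norm (\<Phi> *v z))\<^sup>2 = inner (\<Phi> *v a) (\<Phi> *v z)"
    using orth by (simp add: residual matrix_vector_mult_diff_distrib inner_diff_left power2_norm_eq_inner)
  also have "\<dots> \<le> 2 * \<epsilon> * norm a * norm z"
    using RIC_inner_le[OF RIC eps(2) disj card] by linarith
  finally have "(1 - \<epsilon>) * (norm (\<Phi> *v z))\<^sup>2 \<le> (1 - \<epsilon>) * (2 * \<epsilon> * norm a * norm z)"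
    using eps by (intro mult_left_mono) auto
  also have "\<dots> = 2 * \<epsilon> * norm a * ((1 - \<epsilon>) * norm z)"
    by (simp add: algebra_simps)
  also have "\<dots> \<le> 2 * \<epsilon> * norm a * norm (\<Phi> *v z)"
    using lower eps by (simp add: mult_left_mono)
  finally show "(1 - \<epsilon>) * (norm (\<Phi> *v z))\<^sup>2 \<le> 2 * \<epsilon> * norm a * norm (\<Phi> *v z)" .
qed (use eps in auto)

lemma residual_correlation_ge:
  "(1 - \<epsilon>)\<^sup>2 * norm a \<le> norm (restrict_vec (transpose \<Phi> *v r) (supp a))"
proof (rule square_le_cancel)
  define u where "u = transpose \<Phi> *v r"
  have "card (supp (a - z)) \<le> m"
    by (rule le_trans[OF card_mono card]) (auto simp: supp_def)
  then have "(1 - \<epsilon>)\<^sup>2 * (norm (a - z))\<^sup>2 \<le> (norm r)\<^sup>2"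
    using RIC_sq_bounds(1)[OF RIC eps(2)] residual by blast
  moreover have "(1 - \<epsilon>)\<^sup>2 * (norm a)\<^sup>2 \<le> (1 - \<epsilon>)\<^sup>2 * (norm (a - z))\<^sup>2"
    using norm_le_norm_diff_if_disjoint_supp[OF disj] by (simp add: mult_left_mono power_mono)
  moreover have "(norm r)\<^sup>2 = inner r (\<Phi> *v a)"
    using orth by (simp add: residual matrix_vector_mult_diff_distrib inner_diff_right power2_norm_eq_inner)
  moreover have "inner r (\<Phi> *v a) = inner (restrict_vec u (supp a)) a"
    by (simp add: u_def inner_restrict_vec_supp dot_lmul_matrix)
  moreover have "\<dots> \<le> norm (restrict_vec u (supp a)) * norm a"
    by (rule norm_cauchy_schwarz)
  ultimately show "(1 - \<epsilon>)\<^sup>2 * (norm a)\<^sup>2 \<le> norm (restrict_vec u (supp a)) * norm a"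
    by linarith
qed auto

lemma residual_correlation_off_support_le:
  assumes "\<Lambda> \<inter> supp a = {}" "card (supp a \<union> \<Lambda>) \<le> m"
  shows "(1 - \<epsilon>) * norm (restrict_vec (transpose \<Phi> *v r) \<Lambda>) \<le> 4 * \<epsilon> * norm a"
proof (rule square_le_cancel)
  define b where "b = restrict_vec (transpose \<Phi> *v r) \<Lambda>"
  have supp_b: "supp b \<subseteq> \<Lambda>"
    by (simp add: b_def supp_restrict_vec)
  have card_b: "card (supp b) \<le> m"
    by (rule le_trans[OF card_mono assms(2)]) (use supp_b in auto)
  have "(norm b)\<^sup>2 = inner (transpose \<Phi> *v r) b"
    by (simp add: b_def power2_norm_eq_inner inner_restrict_vec_supp supp_restrict_vec)
  also have "\<dots> = inner (\<Phi> *v a) (\<Phi> *v b) - inner (\<Phi> *v z) (\<Phi> *v b)"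
    by (simp add: dot_lmul_matrix residual matrix_vector_mult_diff_distrib inner_diff_left)
  also have "\<dots> \<le> 2 * \<epsilon> * norm a * norm b + norm (\<Phi> *v z) * ((1 + \<epsilon>) * norm b)"
  proof -
    have "supp a \<inter> supp b = {}" "card (supp a \<union> supp b) \<le> m"
      using assms supp_b by (auto intro: le_trans[OF card_mono assms(2)])
    then have "inner (\<Phi> *v a) (\<Phi> *v b) \<le> 2 * \<epsilon> * norm a * norm b"
      using RIC_inner_le[OF RIC eps(2)] by fastforce
    moreover have "- inner (\<Phi> *v z) (\<Phi> *v b) \<le> norm (\<Phi> *v z) * norm (\<Phi> *v b)"
      using Cauchy_Schwarz_ineq2[of "\<Phi> *v z" "\<Phi> *v b"] by linarith
    moreover have "norm (\<Phi> *v z) * norm (\<Phi> *v b) \<le> norm (\<Phi> *v z) * ((1 + \<epsilon>) * norm b)"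
      using RIC card_b unfolding RIC_def sparse_def by (simp add: mult_left_mono)
    ultimately show ?thesis
      by linarith
  qed
  finally have "(1 - \<epsilon>) * (norm b)\<^sup>2 \<le>
      (1 - \<epsilon>) * (2 * \<epsilon> * norm a * norm b + norm (\<Phi> *v z) * ((1 + \<epsilon>) * norm b))"
    using eps by (intro mult_left_mono) auto
  also have "\<dots> =
      (1 - \<epsilon>) * (2 * \<epsilon> * norm a * norm b) + ((1 - \<epsilon>) * norm (\<Phi> *v z)) * ((1 + \<epsilon>) * norm b)"
    by (simp add: algebra_simps)
  also have "\<dots> \<le> (1 - \<epsilon>) * (2 * \<epsilon> * norm a * norm b) + (2 * \<epsilon> * norm a) * ((1 + \<epsilon>) * norm b)"
    using residual_image_norm_le eps by (simp add: mult_right_mono)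
  also have "\<dots> = 4 * \<epsilon> * norm a * norm b"
    by (simp add: algebra_simps)
  finally show "(1 - \<epsilon>) * (norm b)\<^sup>2 \<le> 4 * \<epsilon> * norm a * norm b" .
qed (use eps in auto)

end

lemma identify_ok_subset_supp:
  assumes "identify_ok n u J"
  shows "J \<subseteq> supp u"
proof (cases "card (supp u) \<le> n")
  case False
  then have "card J = n" and top: "\<And>i j. i \<in> J \<Longrightarrow> j \<notin> J \<Longrightarrow> \<bar>u $ j\<bar> \<le> \<bar>u $ i\<bar>"
    using assms unfolding identify_ok_def by auto
  have "\<not> supp u \<subseteq> J"
    using False \<open>card J = n\<close> card_mono[OF finite, of "supp u" J] by linarith
  then obtain j where "j \<in> supp u" "j \<notin> J"
    by blast
  then show ?thesis
    using top by (force simp: supp_def)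
qed (use assms in \<open>simp add: identify_ok_def\<close>)

lemma identify_ok_card_le: "identify_ok n u J \<Longrightarrow> card J \<le> n"
  unfolding identify_ok_def by (auto split: if_splits)

lemma identify_ok_energy_ge:
  assumes "identify_ok n u J" "card S \<le> n"
  shows "(\<Sum>i\<in>S. (u$i)\<^sup>2) \<le> (\<Sum>i\<in>J. (u$i)\<^sup>2)"
proof (cases "card (supp u) \<le> n")
  case True
  then have "J = supp u"
    using assms unfolding identify_ok_def by auto
  moreover have "(\<Sum>i\<in>S. (u$i)\<^sup>2) = (\<Sum>i\<in>S \<inter> supp u. (u$i)\<^sup>2)"
    by (rule sum.mono_neutral_right) (auto simp: supp_def)
  ultimately show ?thesis
    by (simp add: sum_mono2)
next
  case False
  then have "card J = n" and top: "\<And>i j. i \<in> J \<Longrightarrow> j \<notin> J \<Longrightarrow> \<bar>u $ j\<bar> \<le> \<bar>u $ i\<bar>"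
    using assms unfolding identify_ok_def by auto
  have "card (S - J) \<le> card (J - S)"
    using assms(2) \<open>card J = n\<close> card_Int_Diff[of S J] card_Int_Diff[of J S]
    by (simp add: Int_commute)
  then have "(\<Sum>i\<in>S - J. (u$i)\<^sup>2) \<le> (\<Sum>i\<in>J - S. (u$i)\<^sup>2)"
    by (rule sum_le_sum_if_card_le_dominated) (auto simp: abs_le_square_iff[symmetric] top)
  then show ?thesis
    using sum.Int_Diff[of S "\<lambda>i. (u$i)\<^sup>2" J] sum.Int_Diff[of J "\<lambda>i. (u$i)\<^sup>2" S]
    by (simp add: Int_commute)
qed

lemma regularize_ok_energy_ge:
  assumes "regularize_ok u J J0" "K \<subseteq> J" "comparable u K"
  shows "(\<Sum>i\<in>K. (u$i)\<^sup>2) \<le> (\<Sum>i\<in>J0. (u$i)\<^sup>2)"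
proof -
  have "norm (restrict_vec u K) \<le> norm (restrict_vec u J0)"
    using assms unfolding regularize_ok_def by blast
  then show ?thesis
    by (simp flip: norm_restrict_vec_sq add: power_mono)
qed

lemma regularize_ok_energy_dyadic_le:
  assumes reg: "regularize_ok u J J0" and bound: "\<And>i. i \<in> J \<Longrightarrow> \<bar>u$i\<bar> \<le> M"
  shows "(\<Sum>i\<in>{i\<in>J. M / 2^k < \<bar>u$i\<bar>}. (u$i)\<^sup>2) \<le> real k * (\<Sum>i\<in>J0. (u$i)\<^sup>2)"
proof (induction k)
  case 0
  have empty: "{i\<in>J. M / 2^0 < \<bar>u$i\<bar>} = {}"
    using bound by force
  show ?case
    unfolding empty by simp
next
  case (Suc k)
  define A where "A = {i\<in>J. M / 2^Suc k < \<bar>u$i\<bar> \<and> \<bar>u$i\<bar> \<le> M / 2^k}"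
  have "comparable u A"
    unfolding comparable_def
  proof (intro ballI)
    fix i j assume "i \<in> A" "j \<in> A"
    then have "\<bar>u$i\<bar> \<le> M / 2^k" "M / 2^Suc k < \<bar>u$j\<bar>"
      unfolding A_def by auto
    moreover have "M / 2^k = 2 * (M / 2^Suc k)"
      by simp
    ultimately show "\<bar>u$i\<bar> \<le> 2 * \<bar>u$j\<bar>"
      by linarith
  qed
  then have A_energy: "(\<Sum>i\<in>A. (u$i)\<^sup>2) \<le> (\<Sum>i\<in>J0. (u$i)\<^sup>2)"
    using regularize_ok_energy_ge[OF reg] by (auto simp: A_def)
  have "(\<Sum>i\<in>{i\<in>J. M / 2^Suc k < \<bar>u$i\<bar>}. (u$i)\<^sup>2) \<le>
        (\<Sum>i\<in>{i\<in>J. M / 2^k < \<bar>u$i\<bar>} \<union> A. (u$i)\<^sup>2)"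
    by (rule sum_mono2) (auto simp: A_def)
  also have "\<dots> = (\<Sum>i\<in>{i\<in>J. M / 2^k < \<bar>u$i\<bar>}. (u$i)\<^sup>2) + (\<Sum>i\<in>A. (u$i)\<^sup>2)"
    by (rule sum.union_disjoint) (auto simp: A_def)
  finally show ?case
    using Suc.IH A_energy by (simp add: algebra_simps)
qed

text \<open>With \<open>M\<close> the largest \<open>\<bar>u i\<bar>\<close> on \<open>J\<close>, split \<open>J\<close> into the comparable layers
  \<open>M/2^(k+1) < \<bar>u i\<bar> \<le> M/2^k\<close>, \<open>k < K\<close>, and a remainder of at most \<open>2^K\<close> coordinates of size
  at most \<open>M/2^K\<close>, hence of energy at most \<open>M\<^sup>2\<close>. Each of these \<open>K + 1\<close> pieces carries at most the
  energy of \<open>J0\<close>.\<close>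
lemma regularize_ok_energy_le:
  assumes reg: "regularize_ok u J J0" and card: "card J \<le> 2^K"
  shows "(\<Sum>i\<in>J. (u$i)\<^sup>2) \<le> (real K + 1) * (\<Sum>i\<in>J0. (u$i)\<^sup>2)"
proof (cases "J = {}")
  case False
  define E where "E = (\<Sum>i\<in>J0. (u$i)\<^sup>2)"
  define M where "M = Max ((\<lambda>i. \<bar>u$i\<bar>) ` J)"
  have "M \<in> (\<lambda>i. \<bar>u$i\<bar>) ` J"
    unfolding M_def using False by (intro Max_in) auto
  then obtain i0 where i0: "i0 \<in> J" "M = \<bar>u$i0\<bar>"
    by blast
  have bound: "\<bar>u$i\<bar> \<le> M" if "i \<in> J" for i
    unfolding M_def using that by simp
  have "comparable u {i0}"
    by (simp add: comparable_def)
  then have "M\<^sup>2 \<le> E"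
    using regularize_ok_energy_ge[OF reg, of "{i0}"] i0 by (simp add: E_def)
  define H where "H = {i\<in>J. M / 2^K < \<bar>u$i\<bar>}"
  have "(\<Sum>i\<in>J - H. (u$i)\<^sup>2) \<le> real (card (J - H)) * (M / 2^K)\<^sup>2"
    using i0 by (intro sum_bounded_above) (auto simp: H_def abs_le_square_iff[symmetric] not_less)
  also have "\<dots> \<le> 2^K * (M / 2^K)\<^sup>2"
    using card card_mono[of J "J - H"] by (intro mult_right_mono) (auto simp flip: of_nat_le_iff)
  also have "\<dots> = M\<^sup>2 / 2^K"
    by (simp add: power_divide power2_eq_square)
  also have "\<dots> \<le> M\<^sup>2"
    by (simp add: divide_le_eq mult_le_cancel_left1)
  finally have "(\<Sum>i\<in>J - H. (u$i)\<^sup>2) \<le> E"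
    using \<open>M\<^sup>2 \<le> E\<close> by linarith
  moreover have "(\<Sum>i\<in>H. (u$i)\<^sup>2) \<le> real K * E"
    unfolding H_def E_def using regularize_ok_energy_dyadic_le[OF reg bound] .
  moreover have "(\<Sum>i\<in>J. (u$i)\<^sup>2) = (\<Sum>i\<in>J - H. (u$i)\<^sup>2) + (\<Sum>i\<in>H. (u$i)\<^sup>2)"
    by (rule sum.subset_diff) (auto simp: H_def)
  ultimately show ?thesis
    by (simp add: E_def algebra_simps)
qed (simp add: sum_nonneg)

lemma comparable_energy_le:
  assumes comp: "comparable u J0" and "\<Lambda> \<subseteq> J0" "card (J0 - \<Lambda>) \<le> card \<Lambda>"
  shows "(\<Sum>i\<in>J0. (u$i)\<^sup>2) \<le> 5 * (\<Sum>i\<in>\<Lambda>. (u$i)\<^sup>2)"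
proof -
  have "(\<Sum>i\<in>J0 - \<Lambda>. (u$i)\<^sup>2) \<le> (\<Sum>i\<in>\<Lambda>. 4 * (u$i)\<^sup>2)"
  proof (rule sum_le_sum_if_card_le_dominated)
    fix j i assume "j \<in> J0 - \<Lambda>" "i \<in> \<Lambda>"
    then have "\<bar>u$j\<bar> \<le> \<bar>2 * u$i\<bar>"
      using comp \<open>\<Lambda> \<subseteq> J0\<close> unfolding comparable_def by (auto simp: abs_mult)
    then show "(u$j)\<^sup>2 \<le> 4 * (u$i)\<^sup>2"
      by (simp add: abs_le_square_iff power_mult_distrib)
  qed (use assms in auto)
  moreover have "(\<Sum>i\<in>J0. (u$i)\<^sup>2) = (\<Sum>i\<in>\<Lambda>. (u$i)\<^sup>2) + (\<Sum>i\<in>J0 - \<Lambda>. (u$i)\<^sup>2)"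
    using assms(2) by (simp add: sum.subset_diff)
  ultimately show ?thesis
    by (simp add: sum_distrib_left[symmetric])
qed

definition projection_residual :: "real^'d^'N \<Rightarrow> real^'d \<Rightarrow> 'd set \<Rightarrow> real^'N \<Rightarrow> bool" where
  "projection_residual \<Phi> v I r \<longleftrightarrow>
     (\<exists>y. supp y \<subseteq> I \<and> r = \<Phi> *v (v - y)) \<and> (\<forall>z. supp z \<subseteq> I \<longrightarrow> inner r (\<Phi> *v z) = 0)"

lemma projection_residual_empty: "projection_residual \<Phi> v {} (\<Phi> *v v)"
  unfolding projection_residual_def by (auto simp: supp_eq_empty_iff)

text \<open>Test minimality of \<open>y\<close> against \<open>y + t z\<close> with \<open>t = c / (d + 1)\<close>, where \<open>c\<close> is the
  inner product to be shown zero and \<open>d = \<parallel>\<Phi> z\<parallel>\<^sup>2\<close>; the \<open>+ 1\<close> saves a case split on \<open>d = 0\<close>.\<close>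
lemma lsq_ok_orthogonal:
  assumes "lsq_ok \<Phi> x I y" "supp z \<subseteq> I"
  shows "inner (x - \<Phi> *v y) (\<Phi> *v z) = 0"
proof -
  define r c d where "r = x - \<Phi> *v y" and "c = inner r (\<Phi> *v z)" and "d = (norm (\<Phi> *v z))\<^sup>2"
  define t where "t = c / (d + 1)"
  have "d \<ge> 0"
    by (simp add: d_def)
  then have c_eq: "c = t * (d + 1)"
    by (simp add: t_def)
  have "supp (y + t *\<^sub>R z) \<subseteq> supp y \<union> supp z"
    by (auto simp: supp_def)
  then have "supp (y + t *\<^sub>R z) \<subseteq> I"
    using assms unfolding lsq_ok_def by blast
  then have "norm r \<le> norm (x - \<Phi> *v (y + t *\<^sub>R z))"
    using assms(1) unfolding lsq_ok_def r_def by blast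
  also have "x - \<Phi> *v (y + t *\<^sub>R z) = r - t *\<^sub>R (\<Phi> *v z)"
    by (simp add: r_def matrix_vector_right_distrib matrix_vector_mult_scaleR)
  finally have "norm r \<le> norm (r - t *\<^sub>R (\<Phi> *v z))" .
  then have "(norm r)\<^sup>2 \<le> (norm (r - t *\<^sub>R (\<Phi> *v z)))\<^sup>2"
    by (simp add: power_mono)
  also have "\<dots> = (norm r)\<^sup>2 - 2 * t * c + t\<^sup>2 * d"
    unfolding power2_norm_eq_inner c_def d_def
    by (simp add: inner_diff_left inner_diff_right inner_commute algebra_simps power2_eq_square)
  finally have "t\<^sup>2 * (d + 2) \<le> 0"
    by (simp add: c_eq power2_eq_square algebra_simps)
  then have "t = 0"
    using \<open>d \<ge> 0\<close> by (simp add: mult_le_0_iff)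
  then have "c = 0"
    using c_eq by simp
  then show ?thesis
    by (simp add: c_def r_def)
qed

lemma projection_residual_lsq_ok:
  assumes "lsq_ok \<Phi> (\<Phi> *v v) I y"
  shows "projection_residual \<Phi> v I (\<Phi> *v v - \<Phi> *v y)"
  using assms lsq_ok_orthogonal[OF assms] unfolding projection_residual_def lsq_ok_def
  by (auto simp: matrix_vector_mult_diff_distrib)

lemma projection_residual_transpose_vanishes:
  assumes "projection_residual \<Phi> v I r" "i \<in> I"
  shows "(transpose \<Phi> *v r) $ i = 0"
proof -
  have "supp (axis i (1::real)) \<subseteq> I"
    using assms(2) by (auto simp: supp_def axis_def)
  then show ?thesis
    using assms(1) transpose_mult_vec_nth[of \<Phi> r i] by (simp add: projection_residual_def)
qed

text \<open>For \<open>r = \<Phi> (v - y)\<close> take \<open>z = y - v|\<^bsub>I\<^esub>\<close>.\<close>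
lemma projection_residual_obtain:
  assumes "projection_residual \<Phi> v I r"
  obtains z where "supp z \<subseteq> I" "r = \<Phi> *v (restrict_vec v (supp v - I) - z)" "inner r (\<Phi> *v z) = 0"
proof -
  obtain y where y: "supp y \<subseteq> I" "r = \<Phi> *v (v - y)"
    using assms unfolding projection_residual_def by blast
  define z where "z = y - restrict_vec v I"
  have "supp z \<subseteq> I"
    using y(1) by (auto simp: z_def supp_def restrict_vec_def)
  moreover have "restrict_vec v (supp v - I) - z = v - y"
    by (auto simp: z_def restrict_vec_def supp_def vec_eq_iff)
  ultimately show ?thesis
    using that assms y(2) unfolding projection_residual_def by auto
qed

context
  fixes \<Phi> :: "real^'d^'N" and v :: "real^'d" and n :: nat and \<epsilon> :: real
    and I :: "'d set" and r :: "real^'N"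
  assumes RIC: "RIC \<Phi> (2 * n) \<epsilon>" and eps: "0 \<le> \<epsilon>" "\<epsilon> \<le> 1"
    and v_sparse: "card (supp v) \<le> n"
    and residual: "projection_residual \<Phi> v I r" and card_I: "card (supp v \<union> I) \<le> 2 * n"
begin

lemma romp_correlation_ge:
  "(1 - \<epsilon>)\<^sup>2 * norm (restrict_vec v (supp v - I))
     \<le> norm (restrict_vec (transpose \<Phi> *v r) (supp v - I))"
proof -
  obtain z where z: "supp z \<subseteq> I" "r = \<Phi> *v (restrict_vec v (supp v - I) - z)" "inner r (\<Phi> *v z) = 0"
    using projection_residual_obtain[OF residual] .
  have "supp (restrict_vec v (supp v - I)) = supp v - I"
    by (auto simp: supp_restrict_vec)
  moreover have "card ((supp v - I) \<union> supp z) \<le> 2 * n"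
    using z(1) by (intro le_trans[OF card_mono card_I]) auto
  ultimately show ?thesis
    using residual_correlation_ge[OF RIC eps _ _ z(2,3)] z(1) by auto
qed

lemma romp_correlation_off_support_le:
  assumes "\<Lambda> \<inter> supp v = {}" "card \<Lambda> \<le> n"
  shows "(1 - \<epsilon>) * norm (restrict_vec (transpose \<Phi> *v r) \<Lambda>)
           \<le> 4 * \<epsilon> * norm (restrict_vec v (supp v - I))"
proof -
  obtain z where z: "supp z \<subseteq> I" "r = \<Phi> *v (restrict_vec v (supp v - I) - z)" "inner r (\<Phi> *v z) = 0"
    using projection_residual_obtain[OF residual] .
  have supp_v0: "supp (restrict_vec v (supp v - I)) = supp v - I"
    by (auto simp: supp_restrict_vec)
  have "card ((supp v - I) \<union> supp z) \<le> 2 * n"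
    using z(1) by (intro le_trans[OF card_mono card_I]) auto
  moreover have "card ((supp v - I) \<union> \<Lambda>) \<le> 2 * n"
    using card_Un_le[of "supp v - I" \<Lambda>] card_mono[of "supp v" "supp v - I"] v_sparse assms(2)
    by auto
  ultimately show ?thesis
    using residual_correlation_off_support_le[OF RIC eps _ _ z(2,3)] z(1) assms(1) supp_v0
    by auto
qed

context
  fixes u :: "real^'d" and J J0 :: "'d set"
  assumes u: "u = transpose \<Phi> *v r"
    and identify: "identify_ok n u J" and regularize: "regularize_ok u J J0"
begin

lemma romp_selection_disjoint: "J0 \<inter> I = {}"
  using regularize identify_ok_subset_supp[OF identify]
    projection_residual_transpose_vanishes[OF residual]
  by (auto simp: regularize_ok_def supp_def u)

lemma romp_energy_ge:
  assumes "n \<le> 2^K"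
  shows "(1 - \<epsilon>)^4 * (norm (restrict_vec v (supp v - I)))\<^sup>2
           \<le> (real K + 1) * (norm (restrict_vec u J0))\<^sup>2"
proof -
  have "card (supp v - I) \<le> n"
    using v_sparse card_mono[of "supp v" "supp v - I"] by auto
  have "(1 - \<epsilon>)^4 * (norm (restrict_vec v (supp v - I)))\<^sup>2
          = ((1 - \<epsilon>)\<^sup>2 * norm (restrict_vec v (supp v - I)))\<^sup>2"
    by (simp add: power_mult_distrib flip: power_mult)
  also have "\<dots> \<le> (norm (restrict_vec u (supp v - I)))\<^sup>2"
    using romp_correlation_ge eps by (simp add: u power_mono)
  also have "\<dots> \<le> (\<Sum>i\<in>J. (u$i)\<^sup>2)"
    using identify_ok_energy_ge[OF identify \<open>card (supp v - I) \<le> n\<close>] by (simp add: norm_restrict_vec_sq)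
  also have "\<dots> \<le> (real K + 1) * (\<Sum>i\<in>J0. (u$i)\<^sup>2)"
    using regularize_ok_energy_le[OF regularize] identify_ok_card_le[OF identify] assms by simp
  finally show ?thesis
    by (simp add: norm_restrict_vec_sq)
qed

lemma romp_norm_ge:
  assumes "n \<le> 2^K" "c\<^sup>2 * (real K + 1) \<le> (1 - \<epsilon>)^4"
  shows "c * norm (restrict_vec v (supp v - I)) \<le> norm (restrict_vec u J0)"
proof (rule power2_le_imp_le)
  define V E where "V = norm (restrict_vec v (supp v - I))" and "E = norm (restrict_vec u J0)"
  have "(real K + 1) * (c * V)\<^sup>2 = (c\<^sup>2 * (real K + 1)) * V\<^sup>2"
    by (simp add: power_mult_distrib)
  also have "\<dots> \<le> (1 - \<epsilon>)^4 * V\<^sup>2"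
    by (rule mult_right_mono[OF assms(2)]) simp
  also have "\<dots> \<le> (real K + 1) * E\<^sup>2"
    unfolding V_def E_def using romp_energy_ge[OF assms(1)] .
  finally show "(c * V)\<^sup>2 \<le> E\<^sup>2"
    by (rule mult_left_le_imp_le) simp
qed simp

lemma romp_energy_le_off_support:
  assumes "\<Lambda> \<subseteq> J0" "\<Lambda> \<inter> supp v = {}" "card (J0 - \<Lambda>) \<le> card \<Lambda>"
  shows "(1 - \<epsilon>)\<^sup>2 * (norm (restrict_vec u J0))\<^sup>2 \<le> 80 * \<epsilon>\<^sup>2 * (norm (restrict_vec v (supp v - I)))\<^sup>2"
proof -
  define V B where "V = norm (restrict_vec v (supp v - I))" and "B = norm (restrict_vec u \<Lambda>)"
  have J0: "J0 \<subseteq> J" "comparable u J0"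
    using regularize unfolding regularize_ok_def by auto
  have "card \<Lambda> \<le> card J"
    using assms(1) J0(1) by (intro card_mono) auto
  then have "card \<Lambda> \<le> n"
    using identify_ok_card_le[OF identify] by linarith
  then have B_le: "(1 - \<epsilon>) * B \<le> 4 * \<epsilon> * V"
    using romp_correlation_off_support_le[OF assms(2)] by (simp add: B_def V_def u)
  have "(norm (restrict_vec u J0))\<^sup>2 \<le> 5 * B\<^sup>2"
    using comparable_energy_le[OF J0(2) assms(1,3)] by (simp add: B_def norm_restrict_vec_sq)
  then have "(1 - \<epsilon>)\<^sup>2 * (norm (restrict_vec u J0))\<^sup>2 \<le> (1 - \<epsilon>)\<^sup>2 * (5 * B\<^sup>2)"
    by (rule mult_left_mono) simp
  also have "\<dots> = 5 * ((1 - \<epsilon>) * B)\<^sup>2"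
    by (simp add: power_mult_distrib mult_ac)
  also have "\<dots> \<le> 5 * (4 * \<epsilon> * V)\<^sup>2"
    using B_le eps by (intro mult_left_mono power_mono) (auto simp: B_def)
  also have "\<dots> = 80 * \<epsilon>\<^sup>2 * V\<^sup>2"
    by (simp add: power_mult_distrib)
  finally show ?thesis
    by (simp add: V_def)
qed

lemma romp_selection_mostly_in_support:
  assumes "n \<le> 2^K" and small: "80 * \<epsilon>\<^sup>2 * (real K + 1) < (1 - \<epsilon>)^6"
  shows "card (J0 - supp v) \<le> card (J0 \<inter> supp v)"
proof (rule ccontr)
  assume many_outside: "\<not> card (J0 - supp v) \<le> card (J0 \<inter> supp v)"
  define \<Lambda> where "\<Lambda> = J0 - supp v"
  define V E where "V = norm (restrict_vec v (supp v - I))" and "E = (norm (restrict_vec u J0))\<^sup>2"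
  have "\<Lambda> \<subseteq> J0" "\<Lambda> \<inter> supp v = {}" "card (J0 - \<Lambda>) \<le> card \<Lambda>"
    using many_outside by (auto simp: \<Lambda>_def Diff_Diff_Int Int_commute)
  then have off_support: "(1 - \<epsilon>)\<^sup>2 * E \<le> 80 * \<epsilon>\<^sup>2 * V\<^sup>2"
    unfolding E_def V_def by (rule romp_energy_le_off_support)
  have "0 \<le> 80 * \<epsilon>\<^sup>2 * (real K + 1)"
    by simp
  then have eps_lt: "\<epsilon> < 1"
    using small eps(2) by (cases "\<epsilon> = 1") auto
  have "(1 - \<epsilon>)^6 * V\<^sup>2 = (1 - \<epsilon>)\<^sup>2 * ((1 - \<epsilon>)^4 * V\<^sup>2)"
    by (simp add: algebra_simps flip: power_add)
  also have "\<dots> \<le> (1 - \<epsilon>)\<^sup>2 * ((real K + 1) * E)"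
    using romp_energy_ge[OF assms(1)] by (intro mult_left_mono) (simp_all add: V_def E_def)
  also have "\<dots> = (real K + 1) * ((1 - \<epsilon>)\<^sup>2 * E)"
    by (simp add: mult_ac)
  also have "\<dots> \<le> (real K + 1) * (80 * \<epsilon>\<^sup>2 * V\<^sup>2)"
    using off_support by (intro mult_left_mono) simp_all
  finally have "((1 - \<epsilon>)^6 - 80 * \<epsilon>\<^sup>2 * (real K + 1)) * V\<^sup>2 \<le> 0"
    by (simp add: algebra_simps)
  then have "V = 0"
    using small by (simp add: mult_le_0_iff)
  then have "E = 0"
    using off_support eps_lt by (simp add: E_def mult_le_0_iff)
  have "\<Lambda> \<noteq> {}"
  proof
    assume "\<Lambda> = {}"
    then have "card (J0 - supp v) = 0"
      unfolding \<Lambda>_def by (simp only: card.empty)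
    then show False
      using many_outside by linarith
  qed
  then obtain i where "i \<in> J0" "i \<in> supp u"
    using regularize identify_ok_subset_supp[OF identify] by (auto simp: \<Lambda>_def regularize_ok_def)
  then have "0 < (u$i)\<^sup>2" "(u$i)\<^sup>2 \<le> E"
    by (auto simp: supp_def E_def norm_restrict_vec_sq intro!: member_le_sum)
  then show False
    using \<open>E = 0\<close> by simp
qed

end

end

lemma card_Un_le_double:
  fixes S I :: "'a::finite set"
  assumes "card (I - S) \<le> card (I \<inter> S)" "card S \<le> n"
  shows "card (S \<union> I) \<le> 2 * n"
proof -
  have "card (S \<union> I) = card (S \<union> (I - S))"
    by simp
  also have "\<dots> = card S + card (I - S)"
    by (rule card_Un_disjoint) auto
  finally have "card (S \<union> I) = card S + card (I - S)" .
  moreover have "card (I \<inter> S) \<le> card S"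
    by (simp add: card_mono)
  ultimately show ?thesis
    using assms by linarith
qed

text \<open>The counting half of the invariant keeps \<open>card (supp v \<union> I) \<le> 2 n\<close>, the sparsity level
  at which the RIC is available.\<close>
lemma romp_state_invariant:
  assumes RIC: "RIC \<Phi> (2 * n) \<epsilon>" and eps: "0 \<le> \<epsilon>" "\<epsilon> \<le> 1"
    and v_sparse: "card (supp v) \<le> n"
    and K: "n \<le> 2^K" "80 * \<epsilon>\<^sup>2 * (real K + 1) < (1 - \<epsilon>)^6"
    and "romp_state \<Phi> (\<Phi> *v v) n I r"
  shows "projection_residual \<Phi> v I r \<and> card (I - supp v) \<le> card (I \<inter> supp v)"
  using \<open>romp_state \<Phi> (\<Phi> *v v) n I r\<close>
proof induction
  case init
  show ?case
    by (simp add: projection_residual_empty)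
next
  case (step I r u J J0 y)
  then have residual: "projection_residual \<Phi> v I r" and half: "card (I - supp v) \<le> card (I \<inter> supp v)"
    by auto
  have card_I: "card (supp v \<union> I) \<le> 2 * n"
    using card_Un_le_double[OF half v_sparse] .
  note romp_step = RIC eps v_sparse residual card_I step.hyps(3-5)
  have disj: "J0 \<inter> I = {}"
    using romp_selection_disjoint[OF romp_step] .
  have "card (J0 - supp v) \<le> card (J0 \<inter> supp v)"
    using romp_selection_mostly_in_support[OF romp_step K] .
  moreover have "card ((I \<union> J0) - supp v) = card (I - supp v) + card (J0 - supp v)"
    unfolding Un_Diff by (rule card_Un_disjoint) (use disj in auto)
  moreover have "card ((I \<union> J0) \<inter> supp v) = card (I \<inter> supp v) + card (J0 \<inter> supp v)"
    unfolding Int_Un_distrib2 by (rule card_Un_disjoint) (use disj in auto)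
  ultimately show ?case
    using half projection_residual_lsq_ok[OF step.hyps(6)] by simp
qed

lemma romp_parameters:
  fixes n :: nat
  assumes "2 \<le> n" and eps: "\<epsilon> = 0.03 / sqrt (ln (real n))"
  shows "0 \<le> \<epsilon>" "\<epsilon> \<le> 1"
    and "80 * \<epsilon>\<^sup>2 * (real (ceillog2 n) + 1) < (1 - \<epsilon>)^6"
    and "(0.32 / sqrt (ln (real n)))\<^sup>2 * (real (ceillog2 n) + 1) \<le> (1 - \<epsilon>)^4"
proof -
  define L where "L = ln (real n)"
  have "ln 2 \<le> L"
    using assms(1) by (simp add: L_def)
  then have L: "2/3 \<le> L"
    using ln2_ge_two_thirds by linarith
  have "real (ceillog2 n) < L / ln 2 + 1"
    using ceillog2_less_log[of n] assms(1) by (simp add: L_def log_def)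
  also have "L / ln 2 \<le> L / (2/3)"
    using L ln2_ge_two_thirds by (intro divide_left_mono) auto
  finally have K: "real (ceillog2 n) + 1 \<le> 9/2 * L"
    using L by simp
  have "(3/4)\<^sup>2 \<le> L"
    using L by (simp add: power2_eq_square)
  then have "3/4 \<le> sqrt L"
    by (rule real_le_rsqrt)
  then have "0 \<le> \<epsilon>" and small: "\<epsilon> \<le> 1/25"
    using L by (auto simp: eps L_def[symmetric] divide_le_eq)
  then show "0 \<le> \<epsilon>" "\<epsilon> \<le> 1"
    by simp_all
  have eps_sq: "\<epsilon>\<^sup>2 = 0.0009 / L" and bound_sq: "(0.32 / sqrt L)\<^sup>2 = 0.1024 / L"
    using L by (simp_all add: eps L_def power_divide)
  have ratio: "(real (ceillog2 n) + 1) / L \<le> 9/2"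
    using K L by (simp add: divide_le_eq)
  have "80 * \<epsilon>\<^sup>2 * (real (ceillog2 n) + 1) = 0.072 * ((real (ceillog2 n) + 1) / L)"
    by (simp add: eps_sq)
  also have "\<dots> \<le> 0.072 * (9/2)"
    by (rule mult_left_mono[OF ratio]) simp
  also have "\<dots> < (24/25)^6"
    by (simp add: power_divide)
  also have "\<dots> \<le> (1 - \<epsilon>)^6"
    using small by (intro power_mono) auto
  finally show "80 * \<epsilon>\<^sup>2 * (real (ceillog2 n) + 1) < (1 - \<epsilon>)^6" .
  have "(0.32 / sqrt (ln (real n)))\<^sup>2 * (real (ceillog2 n) + 1) = 0.1024 * ((real (ceillog2 n) + 1) / L)"
    unfolding L_def[symmetric] bound_sq by simp
  also have "\<dots> \<le> 0.1024 * (9/2)"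
    by (rule mult_left_mono[OF ratio]) simp
  also have "\<dots> \<le> (24/25)^4"
    by (simp add: power_divide)
  also have "\<dots> \<le> (1 - \<epsilon>)^4"
    using small by (intro power_mono) auto
  finally show "(0.32 / sqrt (ln (real n)))\<^sup>2 * (real (ceillog2 n) + 1) \<le> (1 - \<epsilon>)^4" .
qed

theorem lemma3p8:
  fixes \<Phi> :: "real^'d^'N" and v :: "real^'d" and x r :: "real^'N" and u :: "real^'d" and n :: nat
    and I J J0 :: "'d set"
  assumes "RIC \<Phi> (2 * n) (0.03 / sqrt (ln (real n)))"
    and "v \<noteq> 0" and "sparse n v" and "x = \<Phi> *v v"
    and "romp_state \<Phi> x n I r" and "r \<noteq> 0"
    and "u = transpose \<Phi> *v r"
    and "identify_ok n u J" and "regularize_ok u J J0"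
  shows "norm (restrict_vec u J0) \<ge>
           0.32 / sqrt (ln (real n)) * norm (restrict_vec v (supp v - I))"
proof -
  have v_sparse: "card (supp v) \<le> n"
    using assms(3) unfolding sparse_def .
  consider "n = 0" | "n = 1" | "2 \<le> n"
    by linarith
  then show ?thesis
  proof cases
    case 1
    then show ?thesis
      using v_sparse assms(2) by (simp flip: supp_eq_empty_iff)
  next
    case 2
    then show ?thesis
      by simp \<comment> \<open>\<open>ln 1 = 0\<close>, so the coefficient is \<open>0.32 / 0 = 0\<close>\<close>
  next
    case 3
    define \<epsilon> K where "\<epsilon> = 0.03 / sqrt (ln (real n))" and "K = ceillog2 n"
    note params = romp_parameters[OF 3 \<epsilon>_def, folded K_def]
    have RIC: "RIC \<Phi> (2 * n) \<epsilon>" and "n \<le> 2^K"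
      using assms(1) by (simp_all add: \<epsilon>_def K_def le_two_power_ceillog2)
    then have invariant: "projection_residual \<Phi> v I r" "card (I - supp v) \<le> card (I \<inter> supp v)"
      using romp_state_invariant[OF RIC params(1,2) v_sparse _ params(3)] assms(4,5) by auto
    show ?thesis
      using romp_norm_ge[OF RIC params(1,2) v_sparse invariant(1)
          card_Un_le_double[OF invariant(2) v_sparse] assms(7-9) \<open>n \<le> 2^K\<close> params(4)] .
  qed
qed

end
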